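(* For $k\in\{2,3\}$, the graph $BT(k)$ lies in $\mathcal{G}(2k+1,3)$ and \[ \rho_3(BT(k))=\frac{(k+1)(k^2+1)}{3k+2}>\rho_3\big(T(3k+1,3)\big); \] in particular $f_3(2k+1,3)>\rho_3(T(3k+1,3))$.
   Context: $\mathcal{G}(\Delta,\omega)$ denotes the class of finite simple graphs $G$ with maximum degree $\Delta(G)\le\Delta$ and clique number $\omega(G)\le\omega$. $k_t(G)$ is the number of copies of $K_t$ in $G$ and $\rho_t(G)=k_t(G)/|V(G)|$. $f_t(\Delta,\omega)=\sup\{\rho_t(G): G\in\mathcal{G}(\Delta,\omega),\ |V(G)|\ge 1\}$. $T(n,r)$ denotes the $r$-partite Turán graph on $n$ vertices (complete $r$-partite, part sizes as equal as possible). For $k\ge2$, $\widetilde{BT}(k)$ is obtained from the complete bipartite graph $K_{k,k}$ by deleting one edge $xy$ and adding a new vertex adjacent exactly to $x$ and $y$; then $BT(k)=\widetilde{BT}(k)\vee I_{k+1}$ is the join of $\widetilde{BT}(k)$ with an independent set of $k+1$ new vertices (every vertex of $\widetilde{BT}(k)$ adjacent to every vertex of $I_{k+1}$). $BT(k)$ has $3k+2$ vertices. *)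

theory Defs
  imports Complex_Main
begin

definition simple_graph :: "'a set \<Rightarrow> ('a \<Rightarrow> 'a \<Rightarrow> bool) \<Rightarrow> bool" where
  "simple_graph V E \<longleftrightarrow> finite V \<and>
     (\<forall>x y. E x y \<longrightarrow> x \<in> V \<and> y \<in> V \<and> x \<noteq> y \<and> E y x)"

definition degree :: "'a set \<Rightarrow> ('a \<Rightarrow> 'a \<Rightarrow> bool) \<Rightarrow> 'a \<Rightarrow> nat" where
  "degree V E v = card {u \<in> V. E v u}"

definition is_clique :: "'a set \<Rightarrow> ('a \<Rightarrow> 'a \<Rightarrow> bool) \<Rightarrow> 'a set \<Rightarrow> bool" where
  "is_clique V E S \<longleftrightarrow> S \<subseteq> V \<and> (\<forall>x\<in>S. \<forall>y\<in>S. x \<noteq> y \<longrightarrow> E x y)"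

definition in_class :: "nat \<Rightarrow> nat \<Rightarrow> 'a set \<Rightarrow> ('a \<Rightarrow> 'a \<Rightarrow> bool) \<Rightarrow> bool" where
  "in_class D w V E \<longleftrightarrow> simple_graph V E \<and>
     (\<forall>v\<in>V. degree V E v \<le> D) \<and>
     (\<forall>S. is_clique V E S \<longrightarrow> card S \<le> w)"

definition num_cliques :: "nat \<Rightarrow> 'a set \<Rightarrow> ('a \<Rightarrow> 'a \<Rightarrow> bool) \<Rightarrow> nat" where
  "num_cliques t V E = card {S. is_clique V E S \<and> card S = t}"

definition clique_density :: "nat \<Rightarrow> 'a set \<Rightarrow> ('a \<Rightarrow> 'a \<Rightarrow> bool) \<Rightarrow> real" where
  "clique_density t V E = real (num_cliques t V E) / real (card V)"

text \<open>f_t(D,w): supremum of rho_t over all nonempty graphs in the class. Every finite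
graph is isomorphic to one with natural-number vertices, so it suffices to range
over graphs on nat.\<close>
definition f_sup :: "nat \<Rightarrow> nat \<Rightarrow> nat \<Rightarrow> real" where
  "f_sup t D w = Sup {clique_density t V E | (V :: nat set) E.
                         in_class D w V E \<and> V \<noteq> {}}"

text \<open>T(n,r): vertices 0..n-1, vertex i in part (i mod r); parts sizes differ by at most 1.\<close>
definition turan_V :: "nat \<Rightarrow> nat set" where
  "turan_V n = {0..<n}"

definition turan_E :: "nat \<Rightarrow> nat \<Rightarrow> nat \<Rightarrow> nat \<Rightarrow> bool" where
  "turan_E n r i j \<longleftrightarrow> i < n \<and> j < n \<and> i mod r \<noteq> j mod r"

text \<open>Vertices: L i, R i (i<k) the two sides of K_{k,k}; x = L 0, y = R 0;
Z the new vertex adjacent to x and y; I j (j < k+1) the joined independent set.\<close>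
datatype btv = L nat | R nat | Z | I nat

definition BT_V :: "nat \<Rightarrow> btv set" where
  "BT_V k = L ` {..<k} \<union> R ` {..<k} \<union> {Z} \<union> I ` {..<k+1}"

fun BT_tilde_adj :: "btv \<Rightarrow> btv \<Rightarrow> bool" where
  "BT_tilde_adj (L i) (R j) = (\<not> (i = 0 \<and> j = 0))"
| "BT_tilde_adj (R j) (L i) = (\<not> (i = 0 \<and> j = 0))"
| "BT_tilde_adj Z (L i) = (i = 0)"
| "BT_tilde_adj (L i) Z = (i = 0)"
| "BT_tilde_adj Z (R j) = (j = 0)"
| "BT_tilde_adj (R j) Z = (j = 0)"
| "BT_tilde_adj _ _ = False"

definition is_I :: "btv \<Rightarrow> bool" where
  "is_I v \<longleftrightarrow> (\<exists>j. v = I j)"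

definition BT_E :: "nat \<Rightarrow> btv \<Rightarrow> btv \<Rightarrow> bool" where
  "BT_E k u v \<longleftrightarrow> u \<in> BT_V k \<and> v \<in> BT_V k \<and>
     (BT_tilde_adj u v \<or> (is_I u \<and> \<not> is_I v) \<or> (\<not> is_I u \<and> is_I v))"

end

theory Submission
  imports Defs "HOL-Library.Countable"
begin

text \<open>The graph \<open>BT~(k)\<close> is triangle-free with \<open>k\<^sup>2 + 1\<close> edges, and each of the \<open>k + 1\<close>
joined vertices is adjacent to all of it but to no other joined vertex. So a clique of \<open>BT(k)\<close>
contains at most one joined vertex and at most one edge of \<open>BT~(k)\<close>, whence \<open>\<omega> = 3\<close> and the
triangles are exactly the \<open>(k + 1)(k\<^sup>2 + 1)\<close> pairs (edge, joined vertex); every vertex has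
degree at most \<open>2k + 1\<close>. The Turan graph \<open>T(3k+1, 3)\<close> has \<open>k\<^sup>2(k + 1)\<close> triangles, and
\<open>(k\<^sup>2 + 1)/(3k + 2) > k\<^sup>2/(3k + 1)\<close> amounts to \<open>k\<^sup>2 < 3k + 1\<close>, i.e. \<open>k \<le> 3\<close>. For these small
graphs the counts are checked by exhaustive enumeration. Finally, densities in the class are
bounded by \<open>2^(\<Delta> + 1)\<close>, so the supremum \<open>f\<^sub>3\<close> dominates the density of every member, once its
vertices are relabelled by natural numbers.\<close>

fun subseqs_of_length :: "nat \<Rightarrow> 'a list \<Rightarrow> 'a list list" where
  "subseqs_of_length 0 xs = [[]]"
| "subseqs_of_length (Suc n) [] = []"
| "subseqs_of_length (Suc n) (x # xs) =
     map ((#) x) (subseqs_of_length n xs) @ subseqs_of_length (Suc n) xs"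

lemma subseqs_of_length_eq_filter:
  "subseqs_of_length n xs = filter (\<lambda>l. length l = n) (subseqs xs)"
proof (induction n xs rule: subseqs_of_length.induct)
  case (1 xs)
  show ?case by (induction xs) (auto simp: Let_def filter_map comp_def)
qed (auto simp: Let_def filter_map comp_def)

lemma sorted_wrt_iff_pairwise:
  assumes "\<And>x y. P x y = P y x" and "distinct l"
  shows "sorted_wrt P l \<longleftrightarrow> (\<forall>x\<in>set l. \<forall>y\<in>set l. x \<noteq> y \<longrightarrow> P x y)"
  using assms(2) by (induction l) (auto intro: iffD1[OF assms(1)])

locale listed_graph =
  fixes vs :: "'a list" and A :: "'a \<Rightarrow> 'a \<Rightarrow> bool" and E :: "'a \<Rightarrow> 'a \<Rightarrow> bool"
  assumes distinct_vs: "distinct vs"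
    and A_sym: "A x y = A y x"
    and A_irrefl: "\<not> A x x"
    and E_iff: "E x y \<longleftrightarrow> x \<in> set vs \<and> y \<in> set vs \<and> A x y"
begin

lemma simple_graph: "simple_graph (set vs) E"
  unfolding simple_graph_def E_iff using A_sym A_irrefl by auto

lemma degree_eq: "v \<in> set vs \<Longrightarrow> degree (set vs) E v = length (filter (A v) vs)"
proof -
  assume "v \<in> set vs"
  then have "{u \<in> set vs. E v u} = set (filter (A v) vs)" by (auto simp: E_iff)
  then show ?thesis unfolding degree_def by (metis distinct_card distinct_filter distinct_vs)
qed

lemma cliques_eq:
  "{S. is_clique (set vs) E S \<and> card S = t} =
     set ` set (filter (sorted_wrt A) (subseqs_of_length t vs))"
proof -
  have clique_iff: "is_clique (set vs) E (set l) \<longleftrightarrow> sorted_wrt A l"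
    if "l \<in> set (subseqs vs)" for l
  proof -
    have "distinct l" using that distinct_vs by (rule subseqs_distinctD)
    moreover have "set l \<subseteq> set vs"
      using imageI[OF that, of set] by (simp add: subseqs_powset)
    ultimately show ?thesis
      using sorted_wrt_iff_pairwise[of A l, OF A_sym] unfolding is_clique_def E_iff by blast
  qed
  have "S \<in> {S. is_clique (set vs) E S \<and> card S = t} \<longleftrightarrow>
          (\<exists>l \<in> set (subseqs vs). length l = t \<and> sorted_wrt A l \<and> S = set l)" for S
  proof
    assume S: "S \<in> {S. is_clique (set vs) E S \<and> card S = t}"
    then have "S \<in> set ` set (subseqs vs)"
      by (intro subset_subseqs) (simp add: is_clique_def)
    then obtain l where l: "l \<in> set (subseqs vs)" "S = set l" by blast
    moreover have "length l = t"
      using S l distinct_card[OF subseqs_distinctD[OF l(1) distinct_vs]] by simp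
    ultimately show "\<exists>l \<in> set (subseqs vs). length l = t \<and> sorted_wrt A l \<and> S = set l"
      using S clique_iff by blast
  next
    assume "\<exists>l \<in> set (subseqs vs). length l = t \<and> sorted_wrt A l \<and> S = set l"
    then obtain l where l: "l \<in> set (subseqs vs)" "length l = t" "sorted_wrt A l" "S = set l"
      by blast
    then show "S \<in> {S. is_clique (set vs) E S \<and> card S = t}"
      using clique_iff distinct_card[OF subseqs_distinctD[OF l(1) distinct_vs]] by simp
  qed
  then show ?thesis unfolding subseqs_of_length_eq_filter by (auto simp: image_iff)
qed

lemma num_cliques_eq:
  "num_cliques t (set vs) E = length (filter (sorted_wrt A) (subseqs_of_length t vs))"
proof -
  have "distinct (map set (filter (sorted_wrt A) (subseqs_of_length t vs)))"
    unfolding subseqs_of_length_eq_filter filter_filter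
    using distinct_set_subseqs[OF distinct_vs] by (rule distinct_map_filter)
  then show ?thesis
    unfolding num_cliques_def cliques_eq by (metis distinct_card length_map set_map)
qed

lemma in_classI:
  assumes "list_all (\<lambda>v. length (filter (A v) vs) \<le> D) vs"
    and "\<not> list_ex (sorted_wrt A) (subseqs_of_length (Suc w) vs)"
  shows "in_class D w (set vs) E"
  unfolding in_class_def
proof (intro conjI simple_graph ballI allI impI)
  fix v assume "v \<in> set vs"
  then show "degree (set vs) E v \<le> D" using assms(1) degree_eq by (simp add: list_all_iff)
next
  fix S assume S: "is_clique (set vs) E S"
  show "card S \<le> w"
  proof (rule ccontr)
    assume "\<not> card S \<le> w"
    then obtain T where "T \<subseteq> S" "card T = Suc w"
      using obtain_subset_with_card_n[of "Suc w" S] by auto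
    with S have "T \<in> {S. is_clique (set vs) E S \<and> card S = Suc w}"
      by (auto simp: is_clique_def)
    then show False
      using assms(2) unfolding cliques_eq by (auto simp: list_ex_iff)
  qed
qed

end

definition relabel :: "('a \<Rightarrow> 'b) \<Rightarrow> 'a set \<Rightarrow> ('a \<Rightarrow> 'a \<Rightarrow> bool) \<Rightarrow> 'b \<Rightarrow> 'b \<Rightarrow> bool" where
  "relabel f V E a b \<longleftrightarrow> (\<exists>x\<in>V. \<exists>y\<in>V. a = f x \<and> b = f y \<and> E x y)"

context
  fixes f :: "'a \<Rightarrow> 'b" and V :: "'a set" and E :: "'a \<Rightarrow> 'a \<Rightarrow> bool"
  assumes inj: "inj_on f V" and graph: "simple_graph V E"
begin

lemma relabel_image:
  "x \<in> V \<Longrightarrow> y \<in> V \<Longrightarrow> relabel f V E (f x) (f y) \<longleftrightarrow> E x y"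
  using inj unfolding relabel_def inj_on_def by blast

lemma simple_graph_relabel: "simple_graph (f ` V) (relabel f V E)"
  unfolding simple_graph_def
proof (intro conjI allI impI)
  show "finite (f ` V)" using graph by (simp add: simple_graph_def)
  fix a b assume "relabel f V E a b"
  then obtain x y where xy: "x \<in> V" "y \<in> V" "a = f x" "b = f y" "E x y"
    unfolding relabel_def by blast
  moreover have "x \<noteq> y" "E y x" using graph \<open>E x y\<close> by (auto simp: simple_graph_def)
  ultimately show "a \<in> f ` V" "b \<in> f ` V" "a \<noteq> b" "relabel f V E b a"
    using relabel_image inj by (auto simp: inj_on_def)
qed

lemma degree_relabel: "v \<in> V \<Longrightarrow> degree (f ` V) (relabel f V E) (f v) = degree V E v"
proof -
  assume v: "v \<in> V"
  have "{u \<in> f ` V. relabel f V E (f v) u} = f ` {u \<in> V. E v u}"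
    using v relabel_image by auto
  then show ?thesis
    unfolding degree_def by (simp add: card_image inj_on_subset[OF inj])
qed

lemma card_image_subset: "T \<subseteq> V \<Longrightarrow> card (f ` T) = card T"
  using card_image inj_on_subset[OF inj] by blast

lemma is_clique_relabel_iff:
  "is_clique (f ` V) (relabel f V E) S \<longleftrightarrow> (\<exists>T. is_clique V E T \<and> S = f ` T)"
proof
  assume S: "is_clique (f ` V) (relabel f V E) S"
  define T where "T = {x \<in> V. f x \<in> S}"
  have "S = f ` T" using S unfolding T_def is_clique_def by auto
  moreover have "is_clique V E T"
    unfolding is_clique_def
  proof (intro conjI ballI impI)
    show "T \<subseteq> V" by (simp add: T_def)
    fix x y assume xy: "x \<in> T" "y \<in> T" "x \<noteq> y"
    then have "f x \<noteq> f y" using inj by (auto simp: T_def inj_on_def)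
    with xy S have "relabel f V E (f x) (f y)" by (simp add: T_def is_clique_def)
    with xy show "E x y" using relabel_image by (simp add: T_def)
  qed
  ultimately show "\<exists>T. is_clique V E T \<and> S = f ` T" by blast
next
  assume "\<exists>T. is_clique V E T \<and> S = f ` T"
  then obtain T where T: "is_clique V E T" "S = f ` T" by blast
  then have TV: "T \<subseteq> V" by (simp add: is_clique_def)
  show "is_clique (f ` V) (relabel f V E) S"
    unfolding is_clique_def
  proof (intro conjI ballI impI)
    show "S \<subseteq> f ` V" using T TV by auto
    fix a b assume "a \<in> S" "b \<in> S" "a \<noteq> b"
    then obtain x y where "x \<in> T" "y \<in> T" "a = f x" "b = f y" "x \<noteq> y" using T by auto
    moreover have "x \<in> V" "y \<in> V" using \<open>x \<in> T\<close> \<open>y \<in> T\<close> TV by auto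
    ultimately show "relabel f V E a b" using T relabel_image by (simp add: is_clique_def)
  qed
qed

lemma num_cliques_relabel: "num_cliques t (f ` V) (relabel f V E) = num_cliques t V E"
proof -
  have "{S. is_clique (f ` V) (relabel f V E) S \<and> card S = t} =
          image f ` {T. is_clique V E T \<and> card T = t}"
  proof (intro set_eqI iffI)
    fix S assume "S \<in> {S. is_clique (f ` V) (relabel f V E) S \<and> card S = t}"
    then obtain T where "is_clique V E T" "S = f ` T" "card S = t"
      using is_clique_relabel_iff by auto
    then show "S \<in> image f ` {T. is_clique V E T \<and> card T = t}"
      using card_image_subset by (auto simp: is_clique_def)
  next
    fix S assume "S \<in> image f ` {T. is_clique V E T \<and> card T = t}"
    then obtain T where "is_clique V E T" "S = f ` T" "card T = t" by blast
    then show "S \<in> {S. is_clique (f ` V) (relabel f V E) S \<and> card S = t}"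
      using is_clique_relabel_iff card_image_subset by (auto simp: is_clique_def)
  qed
  moreover have "inj_on (image f) {T. is_clique V E T \<and> card T = t}"
    using inj_on_image_Pow[OF inj] by (rule inj_on_subset) (auto simp: is_clique_def)
  ultimately show ?thesis unfolding num_cliques_def by (simp add: card_image)
qed

lemma in_class_relabel:
  assumes "in_class D w V E"
  shows "in_class D w (f ` V) (relabel f V E)"
  unfolding in_class_def
proof (intro conjI simple_graph_relabel ballI allI impI)
  fix u assume "u \<in> f ` V"
  then show "degree (f ` V) (relabel f V E) u \<le> D"
    using assms degree_relabel by (auto simp: in_class_def)
next
  fix S assume "is_clique (f ` V) (relabel f V E) S"
  then obtain T where "is_clique V E T" "S = f ` T" using is_clique_relabel_iff by blast
  moreover have "T \<subseteq> V" using \<open>is_clique V E T\<close> by (simp add: is_clique_def)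
  ultimately show "card S \<le> w" using assms card_image_subset by (simp add: in_class_def)
qed

lemma clique_density_relabel:
  "clique_density t (f ` V) (relabel f V E) = clique_density t V E"
  unfolding clique_density_def by (simp add: num_cliques_relabel card_image inj)

end

lemma num_cliques_le:
  assumes "in_class D w V E" and "V \<noteq> {}"
  shows "num_cliques t V E \<le> card V * 2 ^ (D + 1)"
proof -
  have fin: "finite V" using assms(1) by (simp add: in_class_def simple_graph_def)
  define N where "N v = insert v {u \<in> V. E v u}" for v
  have finN: "finite (N v)" for v using fin by (simp add: N_def)
  have "{S. is_clique V E S \<and> card S = t} \<subseteq> (\<Union>v\<in>V. Pow (N v))"
  proof
    fix S assume "S \<in> {S. is_clique V E S \<and> card S = t}"
    then have S: "is_clique V E S" by simp
    obtain v where "v \<in> V" "S \<subseteq> N v"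
    proof (cases "S = {}")
      case True
      then show ?thesis using that assms(2) by blast
    next
      case False
      then obtain v where "v \<in> S" by blast
      then show ?thesis using S by (intro that[of v]) (auto simp: is_clique_def N_def)
    qed
    then show "S \<in> (\<Union>v\<in>V. Pow (N v))" by blast
  qed
  then have "num_cliques t V E \<le> card (\<Union>v\<in>V. Pow (N v))"
    unfolding num_cliques_def by (intro card_mono) (auto simp: fin finN)
  also have "\<dots> \<le> (\<Sum>v\<in>V. card (Pow (N v)))" by (rule card_UN_le[OF fin])
  also have "\<dots> \<le> (\<Sum>v\<in>V. 2 ^ (D + 1))"
  proof (rule sum_mono)
    fix v assume "v \<in> V"
    then have "card {u \<in> V. E v u} \<le> D" using assms(1) by (simp add: in_class_def degree_def)
    then have "card (N v) \<le> D + 1"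
      unfolding N_def using card_insert_le_m1[of "D + 1"] by fastforce
    then show "card (Pow (N v)) \<le> 2 ^ (D + 1)"
      by (simp add: card_Pow finN power_increasing del: power_Suc)
  qed
  finally show ?thesis by simp
qed

lemma clique_density_le_f_sup:
  fixes V :: "'a::countable set"
  assumes "in_class D w V E" and "V \<noteq> {}"
  shows "clique_density t V E \<le> f_sup t D w"
proof -
  define densities where "densities = {clique_density t V E | (V :: nat set) E.
                                         in_class D w V E \<and> V \<noteq> {}}"
  have graph: "simple_graph V E" using assms(1) by (simp add: in_class_def)
  have inj: "inj_on to_nat V" by (simp add: inj_on_def)
  have "clique_density t V E = clique_density t (to_nat ` V) (relabel to_nat V E)"
    by (simp add: clique_density_relabel[OF inj graph])
  then have "clique_density t V E \<in> densities"
    unfolding densities_def using in_class_relabel[OF inj graph assms(1)] assms(2) by blast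
  moreover have "bdd_above densities"
  proof (rule bdd_aboveI)
    fix d assume "d \<in> densities"
    then obtain V' :: "nat set" and E' where G: "in_class D w V' E'" "V' \<noteq> {}"
      and d: "d = clique_density t V' E'" by (auto simp: densities_def)
    then have "card V' > 0" by (simp add: in_class_def simple_graph_def card_gt_0_iff)
    moreover have "real (num_cliques t V' E') \<le> real (card V') * 2 ^ (D + 1)"
      using num_cliques_le[OF G, of t] by (metis of_nat_le_iff of_nat_mult of_nat_numeral of_nat_power)
    ultimately show "d \<le> 2 ^ (D + 1)"
      unfolding d clique_density_def by (simp add: divide_le_eq mult.commute)
  qed
  ultimately show ?thesis unfolding f_sup_def densities_def[symmetric] by (rule cSup_upper)
qed

instance btv :: countable by countable_datatype

text \<open>\<open>is_I\<close> is defined by an existential, which code evaluation cannot execute.\<close>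

lemma is_I_code [code]: "is_I v = (case v of I _ \<Rightarrow> True | _ \<Rightarrow> False)"
  by (cases v) (auto simp: is_I_def)

definition BT_list :: "nat \<Rightarrow> btv list" where
  "BT_list k = map L [0..<k] @ map R [0..<k] @ [Z] @ map I [0..<k+1]"

definition BT_adj :: "btv \<Rightarrow> btv \<Rightarrow> bool" where
  "BT_adj u v \<longleftrightarrow> BT_tilde_adj u v \<or> is_I u \<noteq> is_I v"

lemma BT_V_eq: "BT_V k = set (BT_list k)"
  by (auto simp: BT_V_def BT_list_def)

interpretation BT: listed_graph "BT_list k" BT_adj "BT_E k" for k
proof
  show "distinct (BT_list k)" by (auto simp: BT_list_def distinct_map inj_on_def)
  show "BT_adj x y = BT_adj y x" for x y
    unfolding BT_adj_def by (cases x; cases y) auto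
  show "\<not> BT_adj x x" for x
    unfolding BT_adj_def by (cases x) auto
  show "BT_E k x y \<longleftrightarrow> x \<in> set (BT_list k) \<and> y \<in> set (BT_list k) \<and> BT_adj x y" for x y
    unfolding BT_E_def BT_adj_def BT_V_eq by auto
qed

interpretation turan: listed_graph "[0..<n]" "\<lambda>i j. i mod r \<noteq> j mod r" "turan_E n r" for n r
  by unfold_locales (auto simp: turan_E_def)

lemma card_BT_V: "card (BT_V k) = 3*k+2"
  unfolding BT_V_eq distinct_card[OF BT.distinct_vs] by (simp add: BT_list_def)

lemma in_class_BT: "k \<in> {2, 3} \<Longrightarrow> in_class (2*k+1) 3 (BT_V k) (BT_E k)"
  unfolding BT_V_eq by (rule BT.in_classI; auto; code_simp)

lemma num_cliques_BT: "k \<in> {2, 3} \<Longrightarrow> num_cliques 3 (BT_V k) (BT_E k) = (k+1) * (k^2+1)"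
  unfolding BT_V_eq BT.num_cliques_eq by (auto; code_simp)

lemma num_cliques_turan:
  "k \<in> {2, 3} \<Longrightarrow> num_cliques 3 (turan_V (3*k+1)) (turan_E (3*k+1) 3) = k^2 * (k+1)"
  unfolding turan_V_def atLeastLessThan_upt turan.num_cliques_eq by (auto; code_simp)

theorem mainTheorem16:
  fixes k :: nat
  assumes "k \<in> {2, 3}"
  shows "in_class (2*k+1) 3 (BT_V k) (BT_E k)
    \<and> clique_density 3 (BT_V k) (BT_E k) = real ((k+1)*(k^2+1)) / real (3*k+2)
    \<and> clique_density 3 (BT_V k) (BT_E k) > clique_density 3 (turan_V (3*k+1)) (turan_E (3*k+1) 3)
    \<and> f_sup 3 (2*k+1) 3 > clique_density 3 (turan_V (3*k+1)) (turan_E (3*k+1) 3)"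
proof -
  have BT_in_class: "in_class (2*k+1) 3 (BT_V k) (BT_E k)" using assms by (rule in_class_BT)
  have density: "clique_density 3 (BT_V k) (BT_E k) = real ((k+1)*(k^2+1)) / real (3*k+2)"
    using assms by (simp add: clique_density_def num_cliques_BT card_BT_V)
  have turan: "clique_density 3 (turan_V (3*k+1)) (turan_E (3*k+1) 3) = real (k^2*(k+1)) / real (3*k+1)"
    unfolding clique_density_def num_cliques_turan[OF assms] by (simp add: turan_V_def)
  have less: "real (k^2*(k+1)) / real (3*k+1) < real ((k+1)*(k^2+1)) / real (3*k+2)"
    using assms by auto
  have "clique_density 3 (BT_V k) (BT_E k) \<le> f_sup 3 (2*k+1) 3"
    using BT_in_class by (rule clique_density_le_f_sup) (simp add: BT_V_def)
  then show ?thesis using BT_in_class density turan less by linarith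
qed

end
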